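(* Assume $A\in\mathbb{R}^{n\times n}$ is $(c_A,\gamma_{sys})$-SED and $B\in\mathbb{R}^{n\times m}$ is $(c_B,\gamma_{sys})$-SED, with $\gamma_{sys}>0$ and $c_A,c_B\ge1$. Let $\kappa\ge1$ and $K\in\mathcal{K}^\kappa$ be $(c_K,\gamma_{sys})$-SED and such that $A+BK$ is $(\tau,\rho)$-stable. Fix $i\in[N]$. Then the solution $P_i$ of the Lyapunov equation $$P_i = S_i + [K]_{i:}^\top [R]_{ii}[K]_{i:} + (A+BK)^\top P_i (A+BK)$$ is $(c_{P_i},\gamma_{P_i})$-SED away from $i$, where $$c_{P_i} = \frac{\|S_i + [K]_{i:}^\top [R]_{ii}[K]_{i:}\|\,\tau^2}{1-e^{-2\rho}} + 2\big(\|[S]_{ii}\| + \|[R]_{ii}\|\,c_K^2\big),\qquad \gamma_{P_i} = \frac{\rho\,\gamma_{sys}}{\rho + \ln(N c_A + N^2 c_B c_K)}.$$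
   Context: $\|\cdot\|$ denotes the Euclidean norm / induced $\ell_2$ matrix norm. There are $N$ agents $[N]=\{1,\dots,N\}$ on an undirected graph with graph distance $\mathrm{dist}$ (so $\mathrm{dist}(i,i)=0$, symmetric, triangle inequality). Agent $i$ has state dimension $n_i$ and input dimension $m_i$, $n=\sum_i n_i$, $m=\sum_i m_i$; matrices are partitioned into blocks $[X]_{lj}$ with row indices of agent $l$ and column indices of agent $j$ (using $n$- or $m$-partitions as appropriate); $[X]_{i:}$ denotes the block row of agent $i$. The $\kappa$-neighborhood of $i$ is $\mathcal{N}_i^\kappa=\{j\in[N]:\mathrm{dist}(i,j)<\kappa\}$, and $\mathcal{K}^\kappa=\{K\in\mathbb{R}^{m\times n}: [K]_{ij}=0 \text{ whenever } j\notin\mathcal{N}_i^\kappa\}$. $S\in\mathbb{R}^{n\times n}$ and $R\in\mathbb{R}^{m\times m}$ are block-diagonal with $[S]_{ii}\succeq0$, $[R]_{ii}\succ0$; $S_i\in\mathbb{R}^{n\times n}$ (resp. $R_i\in\mathbb{R}^{m\times m}$) is the matrix whose only nonzero block is the $(i,i)$ block, equal to $[S]_{ii}$ (resp. $[R]_{ii}$). Definition ($(\tau,\rho)$-stability): $X$ is $(\tau,\rho)$-stable ($\tau\ge1,\rho>0$) if $\|X^k\|\le\tau e^{-\rho k}$ for all integers $k\ge0$. Definition (SED): $X$ is $(c,\gamma)$-SED if $\|[X]_{lj}\|\le c\,e^{-\gamma\,\mathrm{dist}(l,j)}$ for all $l,j$. Definition (SED away from $i$): $X$ is $(c,\gamma)$-SED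 away from $i$ if $\|[X]_{lj}\|\le c\,e^{-\gamma\max(\mathrm{dist}(i,l),\mathrm{dist}(i,j))}$ for all $l,j$. *)

theory Defs
  imports Complex_Main
begin

text \<open>Agents are 0,...,N-1. A global index of an n-vector is a pair (agent i, local
  coordinate a) with a < ns i; similarly for m-vectors with ms. Matrices are
  functions of pairs of global indices; only entries on the index sets matter.\<close>

type_synonym idx = "nat \<times> nat"
type_synonym gmat = "idx \<Rightarrow> idx \<Rightarrow> real"

definition blk :: "(nat \<Rightarrow> nat) \<Rightarrow> nat \<Rightarrow> idx set" where
  "blk ds i = {i} \<times> {..<ds i}"

definition Idx :: "nat \<Rightarrow> (nat \<Rightarrow> nat) \<Rightarrow> idx set" where
  "Idx N ds = (SIGMA i:{..<N}. {..<ds i})"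

definition opnorm :: "idx set \<Rightarrow> idx set \<Rightarrow> gmat \<Rightarrow> real" where
  "opnorm I J M = Sup ((\<lambda>x. sqrt (\<Sum>r\<in>I. (\<Sum>c\<in>J. M r c * x c)\<^sup>2))
                        ` {x. (\<Sum>c\<in>J. (x c)\<^sup>2) \<le> 1})"

definition mmul :: "idx set \<Rightarrow> gmat \<Rightarrow> gmat \<Rightarrow> gmat" where
  "mmul K X Y = (\<lambda>r c. \<Sum>k\<in>K. X r k * Y k c)"

primrec mpow :: "idx set \<Rightarrow> gmat \<Rightarrow> nat \<Rightarrow> gmat" where
  "mpow I X 0 = (\<lambda>r c. if r = c then 1 else 0)"
| "mpow I X (Suc k) = mmul I X (mpow I X k)"

definition mtr :: "gmat \<Rightarrow> gmat" where
  "mtr X = (\<lambda>r c. X c r)"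

definition stable :: "idx set \<Rightarrow> gmat \<Rightarrow> real \<Rightarrow> real \<Rightarrow> bool" where
  "stable I X \<tau> \<rho> \<longleftrightarrow> \<tau> \<ge> 1 \<and> \<rho> > 0 \<and>
     (\<forall>k::nat. opnorm I I (mpow I X k) \<le> \<tau> * exp (- \<rho> * real k))"

definition SED :: "nat \<Rightarrow> (nat \<Rightarrow> nat \<Rightarrow> nat) \<Rightarrow> (nat \<Rightarrow> nat) \<Rightarrow> (nat \<Rightarrow> nat)
                    \<Rightarrow> gmat \<Rightarrow> real \<Rightarrow> real \<Rightarrow> bool" where
  "SED N d rd cd X c \<gamma> \<longleftrightarrow>
     (\<forall>l<N. \<forall>j<N. opnorm (blk rd l) (blk cd j) X \<le> c * exp (- \<gamma> * real (d l j)))"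

definition SED_away :: "nat \<Rightarrow> (nat \<Rightarrow> nat \<Rightarrow> nat) \<Rightarrow> (nat \<Rightarrow> nat) \<Rightarrow> (nat \<Rightarrow> nat)
                    \<Rightarrow> nat \<Rightarrow> gmat \<Rightarrow> real \<Rightarrow> real \<Rightarrow> bool" where
  "SED_away N d rd cd i X c \<gamma> \<longleftrightarrow>
     (\<forall>l<N. \<forall>j<N. opnorm (blk rd l) (blk cd j) X
                    \<le> c * exp (- \<gamma> * real (max (d i l) (d i j))))"

definition local_K :: "nat \<Rightarrow> (nat \<Rightarrow> nat \<Rightarrow> nat) \<Rightarrow> (nat \<Rightarrow> nat) \<Rightarrow> (nat \<Rightarrow> nat)
                        \<Rightarrow> real \<Rightarrow> gmat \<Rightarrow> bool" where
  "local_K N d ns ms \<kappa> K \<longleftrightarrow>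
     (\<forall>i<N. \<forall>j<N. \<not> (real (d i j) < \<kappa>) \<longrightarrow>
        (\<forall>r\<in>blk ms i. \<forall>c\<in>blk ns j. K r c = 0))"

definition block_diag :: "gmat \<Rightarrow> bool" where
  "block_diag X \<longleftrightarrow> (\<forall>r c. fst r \<noteq> fst c \<longrightarrow> X r c = 0)"

definition psd_on :: "idx set \<Rightarrow> gmat \<Rightarrow> bool" where
  "psd_on I X \<longleftrightarrow> (\<forall>r\<in>I. \<forall>c\<in>I. X r c = X c r) \<and>
     (\<forall>x. (\<Sum>r\<in>I. \<Sum>c\<in>I. x r * X r c * x c) \<ge> 0)"

definition pd_on :: "idx set \<Rightarrow> gmat \<Rightarrow> bool" where
  "pd_on I X \<longleftrightarrow> (\<forall>r\<in>I. \<forall>c\<in>I. X r c = X c r) \<and>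
     (\<forall>x. (\<exists>r\<in>I. x r \<noteq> 0) \<longrightarrow> (\<Sum>r\<in>I. \<Sum>c\<in>I. x r * X r c * x c) > 0)"

definition Sblock :: "gmat \<Rightarrow> nat \<Rightarrow> gmat" where
  "Sblock S i = (\<lambda>r c. if fst r = i \<and> fst c = i then S r c else 0)"

definition KRK :: "(nat \<Rightarrow> nat) \<Rightarrow> nat \<Rightarrow> gmat \<Rightarrow> gmat \<Rightarrow> gmat" where
  "KRK ms i K R = (\<lambda>r c. \<Sum>a\<in>blk ms i. \<Sum>b\<in>blk ms i. K a r * R a b * K b c)"

end

theory Submission
  imports Defs "HOL-Analysis.L2_Norm"
begin

text \<open>Write M = A + BK and Q = S_i + [K]_i:^T [R]_ii [K]_i:. Unrolling the Lyapunov equation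
  k0 times gives P = \<Sum>_{k<k0} (M^k)^T Q M^k + (M^k0)^T P M^k0. The cost Q is concentrated at
  agent i and M is SED with constant c_M = c_A + N c_B c_K, so the (l,j) block of the k-th
  summand is at most (N c_M)^{2k} q exp(-\<gamma> (d(i,l) + d(i,j))); stability bounds the
  remainder by \<parallel>Q\<parallel> \<tau>^2 exp(-2\<rho> k0) / (1 - exp(-2\<rho>)). Choosing k0 proportional to the
  distance D = max(d(i,l), d(i,j)) balances the geometrically growing head against the
  decaying tail and yields the rate \<rho>\<gamma> / (\<rho> + ln (N c_M)).\<close>

section \<open>Operator norms of index-set blocks\<close>

definition mvmul :: "idx set \<Rightarrow> gmat \<Rightarrow> (idx \<Rightarrow> real) \<Rightarrow> idx \<Rightarrow> real" where
  "mvmul J M x = (\<lambda>r. \<Sum>c\<in>J. M r c * x c)"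

lemma opnorm_eq_Sup_L2_set:
  "opnorm I J M = Sup ((\<lambda>x. L2_set (mvmul J M x) I) ` {x. L2_set x J \<le> 1})"
proof -
  have "{x. (\<Sum>c\<in>J. (x c)\<^sup>2) \<le> 1} = {x. L2_set x J \<le> 1}"
    by (auto simp: L2_set_def)
  then show ?thesis unfolding opnorm_def mvmul_def L2_set_def by simp
qed

lemma abs_le_L2_set: "finite J \<Longrightarrow> c \<in> J \<Longrightarrow> \<bar>x c\<bar> \<le> L2_set x J"
  using member_le_L2_set[of J c "\<lambda>c. \<bar>x c\<bar>"] by (simp add: L2_set_def)

lemma L2_set_mvmul_le_sum_abs:
  assumes "finite J"
  shows "L2_set (mvmul J M x) I \<le> (\<Sum>r\<in>I. \<Sum>c\<in>J. \<bar>M r c\<bar>) * L2_set x J"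
proof -
  have "L2_set (mvmul J M x) I \<le> (\<Sum>r\<in>I. \<bar>mvmul J M x r\<bar>)" by (rule L2_set_le_sum_abs)
  also have "\<dots> \<le> (\<Sum>r\<in>I. (\<Sum>c\<in>J. \<bar>M r c\<bar>) * L2_set x J)"
  proof (rule sum_mono)
    fix r
    have "\<bar>mvmul J M x r\<bar> \<le> (\<Sum>c\<in>J. \<bar>M r c * x c\<bar>)"
      unfolding mvmul_def by (rule sum_abs)
    also have "\<dots> \<le> (\<Sum>c\<in>J. \<bar>M r c\<bar> * L2_set x J)"
      by (rule sum_mono) (simp add: abs_mult abs_le_L2_set assms mult_left_mono)
    finally show "\<bar>mvmul J M x r\<bar> \<le> (\<Sum>c\<in>J. \<bar>M r c\<bar>) * L2_set x J"
      by (simp add: sum_distrib_right)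
  qed
  finally show ?thesis by (simp add: sum_distrib_right)
qed

lemma bdd_above_L2_set_mvmul:
  assumes "finite J"
  shows "bdd_above ((\<lambda>x. L2_set (mvmul J M x) I) ` {x. L2_set x J \<le> 1})"
proof (rule bdd_aboveI2)
  fix x assume "x \<in> {x. L2_set x J \<le> 1}"
  then have "(\<Sum>r\<in>I. \<Sum>c\<in>J. \<bar>M r c\<bar>) * L2_set x J \<le> (\<Sum>r\<in>I. \<Sum>c\<in>J. \<bar>M r c\<bar>) * 1"
    by (intro mult_left_mono) (auto intro!: sum_nonneg)
  then show "L2_set (mvmul J M x) I \<le> (\<Sum>r\<in>I. \<Sum>c\<in>J. \<bar>M r c\<bar>)"
    using L2_set_mvmul_le_sum_abs[OF assms, of M x I] by simp
qed

lemma L2_set_mvmul_le_opnorm_unit: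
  "finite J \<Longrightarrow> L2_set x J \<le> 1 \<Longrightarrow> L2_set (mvmul J M x) I \<le> opnorm I J M"
  unfolding opnorm_eq_Sup_L2_set by (rule cSup_upper) (auto intro: bdd_above_L2_set_mvmul)

lemma opnorm_nonneg: "finite J \<Longrightarrow> 0 \<le> opnorm I J M"
  using L2_set_mvmul_le_opnorm_unit[of J "\<lambda>c. 0" M I] by (simp add: mvmul_def L2_set_def)

lemma L2_set_mvmul_le_opnorm:
  assumes "finite J"
  shows "L2_set (mvmul J M x) I \<le> opnorm I J M * L2_set x J"
proof (cases "L2_set x J = 0")
  case True
  then have "mvmul J M x = (\<lambda>r. 0)"
    using L2_set_eq_0_iff[OF assms] by (simp add: mvmul_def)
  then show ?thesis using True by (simp add: L2_set_def)
next
  case False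
  define s where "s = L2_set x J"
  have s: "s > 0" using False s_def L2_set_nonneg[of x J] by linarith
  have "mvmul J M (\<lambda>c. x c / s) = (\<lambda>r. mvmul J M x r / s)"
    by (simp add: mvmul_def sum_divide_distrib)
  moreover have "L2_set (\<lambda>c. x c / s) J \<le> 1"
    using L2_set_right_distrib[of "1/s" x J] s s_def by simp
  ultimately have "L2_set (\<lambda>r. mvmul J M x r / s) I \<le> opnorm I J M"
    using L2_set_mvmul_le_opnorm_unit[OF assms] by metis
  then have "L2_set (mvmul J M x) I / s \<le> opnorm I J M"
    using L2_set_right_distrib[of "1/s" "mvmul J M x" I] s by simp
  then show ?thesis using s s_def by (simp add: field_simps)
qed

lemma opnorm_leI:
  assumes "C \<ge> 0" and "\<And>x. L2_set (mvmul J M x) I \<le> C * L2_set x J"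
  shows "opnorm I J M \<le> C"
  unfolding opnorm_eq_Sup_L2_set
proof (rule cSup_least)
  have "(\<lambda>c. 0) \<in> {x. L2_set x J \<le> 1}" by (simp add: L2_set_def)
  then show "(\<lambda>x. L2_set (mvmul J M x) I) ` {x. L2_set x J \<le> 1} \<noteq> {}" by blast
next
  fix y assume "y \<in> (\<lambda>x. L2_set (mvmul J M x) I) ` {x. L2_set x J \<le> 1}"
  then obtain x where "L2_set x J \<le> 1" and y: "y = L2_set (mvmul J M x) I" by blast
  then have "C * L2_set x J \<le> C" using assms(1) mult_left_mono[of _ 1 C] by simp
  then show "y \<le> C" using assms(2)[of x] y by simp
qed

lemma opnorm_cong:
  assumes "\<And>r c. r \<in> I \<Longrightarrow> c \<in> J \<Longrightarrow> M r c = M' r c"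
  shows "opnorm I J M = opnorm I J M'"
proof -
  have "L2_set (mvmul J M x) I = L2_set (mvmul J M' x) I" for x
    by (rule L2_set_cong) (auto simp: mvmul_def assms)
  then show ?thesis unfolding opnorm_eq_Sup_L2_set by simp
qed

lemma opnorm_zero: "opnorm I J (\<lambda>r c. 0) = 0"
proof -
  have "(\<lambda>x. L2_set (mvmul J (\<lambda>r c. 0) x) I) ` {x. L2_set x J \<le> 1} = {0}"
    by (auto simp: mvmul_def L2_set_def intro!: image_eqI[of _ _ "\<lambda>c. 0"])
  then show ?thesis unfolding opnorm_eq_Sup_L2_set by simp
qed

lemma mvmul_mmul: "finite K \<Longrightarrow> mvmul J (mmul K X Y) x = mvmul K X (mvmul J Y x)"
  unfolding mvmul_def mmul_def
  by (auto simp: sum_distrib_left sum_distrib_right mult.assoc intro!: ext sum.swap)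

lemma opnorm_mmul_le:
  assumes "finite J" "finite L"
  shows "opnorm I L (mmul J X Y) \<le> opnorm I J X * opnorm J L Y"
proof (rule opnorm_leI)
  show "0 \<le> opnorm I J X * opnorm J L Y" using assms by (simp add: opnorm_nonneg)
  fix x
  have "L2_set (mvmul L (mmul J X Y) x) I = L2_set (mvmul J X (mvmul L Y x)) I"
    using assms by (simp add: mvmul_mmul)
  also have "\<dots> \<le> opnorm I J X * L2_set (mvmul L Y x) J"
    using assms by (simp add: L2_set_mvmul_le_opnorm)
  also have "\<dots> \<le> opnorm I J X * (opnorm J L Y * L2_set x L)"
    using assms by (intro mult_left_mono L2_set_mvmul_le_opnorm opnorm_nonneg)
  finally show "L2_set (mvmul L (mmul J X Y) x) I \<le> opnorm I J X * opnorm J L Y * L2_set x L"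
    by simp
qed

lemma opnorm_add_le:
  assumes "finite J"
  shows "opnorm I J (\<lambda>r c. X r c + Y r c) \<le> opnorm I J X + opnorm I J Y"
proof (rule opnorm_leI)
  show "0 \<le> opnorm I J X + opnorm I J Y" using assms by (simp add: opnorm_nonneg)
  fix x
  have "mvmul J (\<lambda>r c. X r c + Y r c) x = (\<lambda>r. mvmul J X x r + mvmul J Y x r)"
    by (simp add: mvmul_def algebra_simps sum.distrib)
  then have "L2_set (mvmul J (\<lambda>r c. X r c + Y r c) x) I
      \<le> L2_set (mvmul J X x) I + L2_set (mvmul J Y x) I"
    using L2_set_triangle_ineq by metis
  also have "\<dots> \<le> opnorm I J X * L2_set x J + opnorm I J Y * L2_set x J"
    using assms by (intro add_mono L2_set_mvmul_le_opnorm)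
  finally show "L2_set (mvmul J (\<lambda>r c. X r c + Y r c) x) I
      \<le> (opnorm I J X + opnorm I J Y) * L2_set x J"
    by (simp add: algebra_simps)
qed

lemma opnorm_sum_le:
  assumes "finite J"
  shows "opnorm I J (\<lambda>r c. \<Sum>k\<in>F. X k r c) \<le> (\<Sum>k\<in>F. opnorm I J (X k))"
proof (induction F rule: infinite_finite_induct)
  case (insert a F)
  have "opnorm I J (\<lambda>r c. \<Sum>k\<in>insert a F. X k r c)
      = opnorm I J (\<lambda>r c. X a r c + (\<Sum>k\<in>F. X k r c))"
    using insert by simp
  also have "\<dots> \<le> opnorm I J (X a) + opnorm I J (\<lambda>r c. \<Sum>k\<in>F. X k r c)"
    by (rule opnorm_add_le[OF assms])
  also have "\<dots> \<le> opnorm I J (X a) + (\<Sum>k\<in>F. opnorm I J (X k))"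
    using insert.IH by simp
  finally show ?case using insert.hyps by simp
qed (simp_all add: opnorm_zero)

lemma L2_set_subset_le: "finite I \<Longrightarrow> I' \<subseteq> I \<Longrightarrow> L2_set f I' \<le> L2_set f I"
  unfolding L2_set_def by (intro real_sqrt_le_mono sum_mono2) auto

lemma opnorm_mono:
  assumes "finite I" "finite J" "I' \<subseteq> I" "J' \<subseteq> J"
  shows "opnorm I' J' X \<le> opnorm I J X"
proof (rule opnorm_leI)
  show "0 \<le> opnorm I J X" using assms by (simp add: opnorm_nonneg)
  fix x :: "idx \<Rightarrow> real"
  define x' where "x' = (\<lambda>c. if c \<in> J' then x c else 0)"
  have "finite J'" using assms finite_subset by blast
  have "mvmul J X x' = mvmul J' X x"
    unfolding mvmul_def x'_def using assms
    by (auto intro!: ext simp: if_distrib sum.If_cases Int_absorb1 cong: if_cong)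
  moreover have "L2_set x' J = L2_set x J'"
  proof -
    have "(\<Sum>c\<in>J. (x' c)\<^sup>2) = (\<Sum>c\<in>J. if c \<in> J' then (x c)\<^sup>2 else 0)"
      by (rule sum.cong) (auto simp: x'_def)
    also have "\<dots> = (\<Sum>c\<in>J'. (x c)\<^sup>2)" using assms by (simp add: sum.If_cases Int_absorb1)
    finally show ?thesis unfolding L2_set_def by simp
  qed
  moreover have "L2_set (mvmul J' X x) I' \<le> L2_set (mvmul J' X x) I"
    using assms by (simp add: L2_set_subset_le)
  moreover have "L2_set (mvmul J X x') I \<le> opnorm I J X * L2_set x' J"
    using assms by (simp add: L2_set_mvmul_le_opnorm)
  ultimately show "L2_set (mvmul J' X x) I' \<le> opnorm I J X * L2_set x J'" by simp
qed

lemma opnorm_mtr_le: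
  assumes "finite I" "finite J"
  shows "opnorm J I (mtr X) \<le> opnorm I J X"
proof (rule opnorm_leI)
  show "0 \<le> opnorm I J X" using assms by (simp add: opnorm_nonneg)
  fix y
  define z where "z = mvmul I (mtr X) y"
  have "(L2_set z J)\<^sup>2 = (\<Sum>c\<in>J. z c * z c)"
    unfolding L2_set_def by (simp add: sum_nonneg power2_eq_square)
  also have "\<dots> = (\<Sum>r\<in>I. y r * mvmul J X z r)"
    by (simp add: z_def mvmul_def mtr_def sum_distrib_left sum_distrib_right
        mult.commute mult.left_commute sum.swap[of _ J I])
  also have "\<dots> \<le> (\<Sum>r\<in>I. \<bar>y r\<bar> * \<bar>mvmul J X z r\<bar>)"
    by (rule sum_mono) (simp add: abs_mult[symmetric])
  also have "\<dots> \<le> L2_set y I * L2_set (mvmul J X z) I" by (rule L2_set_mult_ineq)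
  also have "\<dots> \<le> L2_set y I * (opnorm I J X * L2_set z J)"
    using assms by (intro mult_left_mono L2_set_mvmul_le_opnorm) auto
  finally have "L2_set z J * L2_set z J \<le> (opnorm I J X * L2_set y I) * L2_set z J"
    by (simp add: power2_eq_square algebra_simps)
  then show "L2_set (mvmul I (mtr X) y) J \<le> opnorm I J X * L2_set y I"
    unfolding z_def[symmetric]
    using L2_set_nonneg[of z J] assms
    by (cases "L2_set z J = 0") (auto simp: opnorm_nonneg)
qed

section \<open>Congruence and the Lyapunov equation\<close>

definition sandwich :: "idx set \<Rightarrow> gmat \<Rightarrow> gmat \<Rightarrow> gmat" where
  "sandwich I X Y = (\<lambda>r c. \<Sum>a\<in>I. \<Sum>b\<in>I. X a r * Y a b * X b c)"

lemma sandwich_eq_mmul: "sandwich I X Y = mmul I (mmul I (mtr X) Y) X"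
  unfolding sandwich_def mmul_def mtr_def
  by (auto intro!: ext simp: sum_distrib_right intro: sum.swap)

lemma opnorm_sandwich_le:
  assumes "finite I" "finite J" "finite L"
  shows "opnorm J L (sandwich I X Y) \<le> opnorm I J X * opnorm I I Y * opnorm I L X"
proof -
  have "opnorm J L (sandwich I X Y) \<le> opnorm J I (mmul I (mtr X) Y) * opnorm I L X"
    unfolding sandwich_eq_mmul using assms by (intro opnorm_mmul_le)
  also have "\<dots> \<le> (opnorm J I (mtr X) * opnorm I I Y) * opnorm I L X"
    using assms by (intro mult_right_mono opnorm_mmul_le opnorm_nonneg)
  also have "\<dots> \<le> (opnorm I J X * opnorm I I Y) * opnorm I L X"
    using assms by (intro mult_right_mono opnorm_mtr_le opnorm_nonneg) auto
  finally show ?thesis .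
qed

lemma sandwich_cong:
  "(\<And>a b. a \<in> I \<Longrightarrow> b \<in> I \<Longrightarrow> Y a b = Y' a b) \<Longrightarrow> sandwich I X Y = sandwich I X Y'"
  unfolding sandwich_def by (auto intro!: ext sum.cong)

lemma sandwich_add:
  "sandwich I X (\<lambda>a b. Y a b + Z a b) = (\<lambda>r c. sandwich I X Y r c + sandwich I X Z r c)"
  unfolding sandwich_def by (auto intro!: ext simp: algebra_simps sum.distrib)

lemma sandwich_sandwich: "sandwich I X (sandwich I M Y) = sandwich I (mmul I M X) Y"
proof (intro ext)
  fix r c
  let ?t = "\<lambda>a b k l. X a r * M k a * Y k l * M l b * X b c"
  have "sandwich I X (sandwich I M Y) r c = (\<Sum>a\<in>I. \<Sum>b\<in>I. \<Sum>k\<in>I. \<Sum>l\<in>I. ?t a b k l)"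
    unfolding sandwich_def by (simp add: sum_distrib_left sum_distrib_right mult_ac)
  also have "\<dots> = (\<Sum>a\<in>I. \<Sum>k\<in>I. \<Sum>b\<in>I. \<Sum>l\<in>I. ?t a b k l)"
    by (rule sum.cong[OF refl], rule sum.swap)
  also have "\<dots> = (\<Sum>k\<in>I. \<Sum>a\<in>I. \<Sum>b\<in>I. \<Sum>l\<in>I. ?t a b k l)"
    by (rule sum.swap)
  also have "\<dots> = (\<Sum>k\<in>I. \<Sum>a\<in>I. \<Sum>l\<in>I. \<Sum>b\<in>I. ?t a b k l)"
    by (intro sum.cong refl sum.swap)
  also have "\<dots> = (\<Sum>k\<in>I. \<Sum>l\<in>I. \<Sum>a\<in>I. \<Sum>b\<in>I. ?t a b k l)"
    by (intro sum.cong refl sum.swap)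
  also have "\<dots> = sandwich I (mmul I M X) Y r c"
    unfolding sandwich_def mmul_def by (simp add: sum_distrib_left sum_distrib_right mult_ac)
  finally show "sandwich I X (sandwich I M Y) r c = sandwich I (mmul I M X) Y r c" .
qed

lemma sandwich_mpow_0:
  assumes "finite I" "r \<in> I" "c \<in> I"
  shows "sandwich I (mpow I M 0) Y r c = Y r c"
proof -
  have "sandwich I (mpow I M 0) Y r c
      = (\<Sum>a\<in>I. if a = r then (\<Sum>b\<in>I. if b = c then Y a b else 0) else 0)"
    unfolding sandwich_def by (intro sum.cong refl) (auto intro: sum.cong)
  then show ?thesis using assms by (simp add: sum.delta')
qed

lemma sandwich_lyapunov_unroll:
  assumes lyap: "\<And>r c. r \<in> I \<Longrightarrow> c \<in> I \<Longrightarrow> P r c = Q r c + sandwich I M P r c"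
  shows "sandwich I (mpow I M j) P = (\<lambda>r c. (\<Sum>k<K. sandwich I (mpow I M (k + j)) Q r c)
           + sandwich I (mpow I M (K + j)) P r c)"
proof (induction K)
  case (Suc K)
  have "sandwich I (mpow I M (K + j)) P
      = sandwich I (mpow I M (K + j)) (\<lambda>a b. Q a b + sandwich I M P a b)"
    by (rule sandwich_cong) (simp add: lyap)
  also have "\<dots> = (\<lambda>r c. sandwich I (mpow I M (K + j)) Q r c + sandwich I (mpow I M (Suc K + j)) P r c)"
    by (simp add: sandwich_add sandwich_sandwich)
  finally have step: "sandwich I (mpow I M (K + j)) P r c
      = sandwich I (mpow I M (K + j)) Q r c + sandwich I (mpow I M (Suc K + j)) P r c" for r c
    by simp
  show ?case unfolding Suc.IH by (simp add: step add.assoc)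
qed simp

lemma lyapunov_solution_expand:
  assumes "finite I"
    and lyap: "\<And>r c. r \<in> I \<Longrightarrow> c \<in> I \<Longrightarrow> P r c = Q r c + sandwich I M P r c"
    and "r \<in> I" "c \<in> I"
  shows "P r c = (\<Sum>k<K. sandwich I (mpow I M k) Q r c) + sandwich I (mpow I M K) P r c"
proof -
  have "P r c = sandwich I (mpow I M 0) P r c" using sandwich_mpow_0[OF assms(1,3,4)] by simp
  also have "\<dots> = (\<Sum>k<K. sandwich I (mpow I M k) Q r c) + sandwich I (mpow I M K) P r c"
    using sandwich_lyapunov_unroll[OF lyap, of 0 K] by simp
  finally show ?thesis .
qed

lemma opnorm_sandwich_mpow_le:
  assumes "finite I" and stab: "stable I M \<tau> \<rho>"
  shows "opnorm I I (sandwich I (mpow I M k) Y) \<le> \<tau>\<^sup>2 * exp (- 2 * \<rho> * real k) * opnorm I I Y"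
proof -
  have Mk: "opnorm I I (mpow I M k) \<le> \<tau> * exp (- \<rho> * real k)"
    using stab unfolding stable_def by blast
  have "opnorm I I (sandwich I (mpow I M k) Y)
      \<le> opnorm I I (mpow I M k) * opnorm I I Y * opnorm I I (mpow I M k)"
    using assms by (intro opnorm_sandwich_le)
  also have "\<dots> \<le> (\<tau> * exp (- \<rho> * real k)) * opnorm I I Y * (\<tau> * exp (- \<rho> * real k))"
    using Mk order_trans[OF opnorm_nonneg Mk] assms by (intro mult_mono) (auto simp: opnorm_nonneg)
  also have "\<dots> = \<tau>\<^sup>2 * exp (- 2 * \<rho> * real k) * opnorm I I Y"
    by (simp add: power2_eq_square exp_add[symmetric] algebra_simps)
  finally show ?thesis .
qed

lemma lyapunov_tail_le:
  assumes fin: "finite I"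
    and lyap: "\<And>r c. r \<in> I \<Longrightarrow> c \<in> I \<Longrightarrow> P r c = Q r c + sandwich I M P r c"
    and stab: "stable I M \<tau> \<rho>"
  shows "opnorm I I (sandwich I (mpow I M j) P)
           \<le> opnorm I I Q * \<tau>\<^sup>2 / (1 - exp (- 2 * \<rho>)) * exp (- 2 * \<rho> * real j)"
proof -
  define r where "r = exp (- 2 * \<rho>)"
  have r0: "0 \<le> r" and r1: "r < 1" using stab by (auto simp: r_def stable_def)
  have exp_eq_power: "exp (- 2 * \<rho> * real n) = r ^ n" for n
    using exp_of_nat_mult[of n "- 2 * \<rho>"] unfolding r_def by (simp add: mult_ac)
  let ?b = "\<tau>\<^sup>2 * opnorm I I Q * r ^ j / (1 - r)"
  let ?C = "\<tau>\<^sup>2 * opnorm I I P * r ^ j"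
  have bound: "opnorm I I (sandwich I (mpow I M j) P) \<le> ?b + ?C * r ^ K" for K
  proof -
    have "opnorm I I (sandwich I (mpow I M j) P)
        \<le> opnorm I I (\<lambda>r c. \<Sum>k<K. sandwich I (mpow I M (k + j)) Q r c)
          + opnorm I I (sandwich I (mpow I M (K + j)) P)"
      using opnorm_add_le[OF fin] sandwich_lyapunov_unroll[OF lyap, of j K] by simp
    also have "\<dots> \<le> (\<Sum>k<K. opnorm I I (sandwich I (mpow I M (k + j)) Q))
        + opnorm I I (sandwich I (mpow I M (K + j)) P)"
      by (intro add_right_mono opnorm_sum_le fin)
    also have "\<dots> \<le> (\<Sum>k<K. \<tau>\<^sup>2 * r ^ (k + j) * opnorm I I Q) + \<tau>\<^sup>2 * r ^ (K + j) * opnorm I I P"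
      using opnorm_sandwich_mpow_le[OF fin stab] unfolding exp_eq_power
      by (intro add_mono sum_mono) auto
    also have "\<dots> = \<tau>\<^sup>2 * opnorm I I Q * r ^ j * (\<Sum>k<K. r ^ k) + ?C * r ^ K"
      by (simp add: power_add sum_distrib_left sum_distrib_right mult_ac)
    also have "\<dots> \<le> \<tau>\<^sup>2 * opnorm I I Q * r ^ j * (1 / (1 - r)) + ?C * r ^ K"
    proof -
      have "(\<Sum>k<K. r ^ k) = (1 - r ^ K) / (1 - r)" using r1 by (simp add: sum_gp_strict)
      also have "\<dots> \<le> 1 / (1 - r)" using r0 r1 by (intro divide_right_mono) auto
      finally show ?thesis using fin r0 by (intro add_right_mono mult_left_mono) (auto simp: opnorm_nonneg)
    qed
    finally show ?thesis by simp
  qed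
  have "(\<lambda>K. ?b + ?C * r ^ K) \<longlonglongrightarrow> ?b + ?C * 0"
    using r0 r1 by (intro tendsto_intros LIMSEQ_power_zero) auto
  then have "opnorm I I (sandwich I (mpow I M j) P) \<le> ?b"
    using bound by (intro LIMSEQ_le_const) auto
  then show ?thesis unfolding exp_eq_power r_def[symmetric] by (simp add: mult_ac)
qed

section \<open>Spatial exponential decay\<close>

lemma finite_blk [simp]: "finite (blk ds i)"
  by (simp add: blk_def)

lemma finite_Idx [simp]: "finite (Idx N ds)"
  by (simp add: Idx_def)

lemma blk_subset_Idx: "i < N \<Longrightarrow> blk ds i \<subseteq> Idx N ds"
  by (auto simp: blk_def Idx_def)

lemma opnorm_mmul_Idx_le:
  assumes "finite L"
  shows "opnorm I L (mmul (Idx N ds) X Y) \<le> (\<Sum>h<N. opnorm I (blk ds h) X * opnorm (blk ds h) L Y)"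
proof -
  have Idx_eq: "Idx N ds = (\<Union>h\<in>{..<N}. blk ds h)"
    by (auto simp: blk_def Idx_def)
  have "mmul (Idx N ds) X Y r c = (\<Sum>h<N. mmul (blk ds h) X Y r c)" for r c
    unfolding Idx_eq mmul_def by (subst sum.UNION_disjoint) (auto simp: blk_def)
  then have "mmul (Idx N ds) X Y = (\<lambda>r c. \<Sum>h<N. mmul (blk ds h) X Y r c)"
    by (intro ext)
  then have "opnorm I L (mmul (Idx N ds) X Y) \<le> (\<Sum>h<N. opnorm I L (mmul (blk ds h) X Y))"
    using opnorm_sum_le[OF assms, of I "\<lambda>h. mmul (blk ds h) X Y" "{..<N}"] by simp
  also have "\<dots> \<le> (\<Sum>h<N. opnorm I (blk ds h) X * opnorm (blk ds h) L Y)"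
    using assms by (intro sum_mono opnorm_mmul_le) auto
  finally show ?thesis .
qed

lemma exp_decay_mult_le:
  fixes a b x :: nat
  assumes "\<gamma> \<ge> 0" "x \<le> a + b"
  shows "exp (- \<gamma> * real a) * exp (- \<gamma> * real b) \<le> exp (- \<gamma> * real x)"
proof -
  have "\<gamma> * real x \<le> \<gamma> * (real a + real b)"
    using assms by (intro mult_left_mono) auto
  then show ?thesis by (simp add: exp_add[symmetric] algebra_simps)
qed

lemma SED_const_nonneg:
  assumes "SED N d rd cd X c \<gamma>" "l < N" "d l l = 0"
  shows "0 \<le> c"
proof -
  have "0 \<le> opnorm (blk rd l) (blk cd l) X" by (simp add: opnorm_nonneg)
  also have "\<dots> \<le> c" using assms unfolding SED_def by fastforce
  finally show ?thesis .
qed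

lemma SED_add:
  assumes "SED N d rd cd X cX \<gamma>" "SED N d rd cd Y cY \<gamma>"
  shows "SED N d rd cd (\<lambda>r c. X r c + Y r c) (cX + cY) \<gamma>"
  unfolding SED_def
proof (intro allI impI)
  fix l j assume "l < N" "j < N"
  then show "opnorm (blk rd l) (blk cd j) (\<lambda>r c. X r c + Y r c) \<le> (cX + cY) * exp (- \<gamma> * real (d l j))"
    using assms unfolding SED_def
    by (intro order_trans[OF opnorm_add_le]) (auto simp: distrib_right intro: add_mono)
qed

lemma SED_mmul:
  assumes X: "SED N d rd md X cX \<gamma>" and Y: "SED N d md cd Y cY \<gamma>"
    and "cX \<ge> 0" "cY \<ge> 0" "\<gamma> \<ge> 0"
    and d_tri: "\<forall>j<N. \<forall>l<N. \<forall>h<N. d j l \<le> d j h + d h l"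
  shows "SED N d rd cd (mmul (Idx N md) X Y) (real N * cX * cY) \<gamma>"
  unfolding SED_def
proof (intro allI impI)
  fix l j assume l: "l < N" and j: "j < N"
  have "opnorm (blk rd l) (blk cd j) (mmul (Idx N md) X Y)
      \<le> (\<Sum>h<N. opnorm (blk rd l) (blk md h) X * opnorm (blk md h) (blk cd j) Y)"
    by (simp add: opnorm_mmul_Idx_le)
  also have "\<dots> \<le> (\<Sum>h<N. cX * cY * exp (- \<gamma> * real (d l j)))"
  proof (rule sum_mono)
    fix h assume h: "h \<in> {..<N}"
    have "opnorm (blk rd l) (blk md h) X * opnorm (blk md h) (blk cd j) Y
        \<le> (cX * exp (- \<gamma> * real (d l h))) * (cY * exp (- \<gamma> * real (d h j)))"
      using X Y l j h unfolding SED_def by (intro mult_mono) (auto simp: opnorm_nonneg assms)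
    also have "\<dots> = cX * cY * (exp (- \<gamma> * real (d l h)) * exp (- \<gamma> * real (d h j)))"
      by simp
    also have "\<dots> \<le> cX * cY * exp (- \<gamma> * real (d l j))"
      using d_tri l j h assms by (intro mult_left_mono exp_decay_mult_le) auto
    finally show "opnorm (blk rd l) (blk md h) X * opnorm (blk md h) (blk cd j) Y
        \<le> cX * cY * exp (- \<gamma> * real (d l j))" .
  qed
  also have "\<dots> = real N * cX * cY * exp (- \<gamma> * real (d l j))"
    by simp
  finally show "opnorm (blk rd l) (blk cd j) (mmul (Idx N md) X Y)
      \<le> real N * cX * cY * exp (- \<gamma> * real (d l j))" .
qed

lemma SED_mpow_Suc:
  assumes M: "SED N d ns ns M c \<gamma>" and "c \<ge> 0" "\<gamma> \<ge> 0"
    and d_tri: "\<forall>j<N. \<forall>l<N. \<forall>h<N. d j l \<le> d j h + d h l"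
  shows "SED N d ns ns (mpow (Idx N ns) M (Suc k)) (real N ^ k * c ^ Suc k) \<gamma>"
proof (induction k)
  case 0
  have "opnorm (blk ns l) (blk ns j) (mpow (Idx N ns) M (Suc 0)) = opnorm (blk ns l) (blk ns j) M"
    if "j < N" for l j
  proof (rule opnorm_cong)
    fix r c assume "c \<in> blk ns j"
    then have "c \<in> Idx N ns" using blk_subset_Idx[OF that] by auto
    then show "mpow (Idx N ns) M (Suc 0) r c = M r c"
      by (simp add: mmul_def if_distrib sum.delta' cong: if_cong)
  qed
  then show ?case using M by (simp add: SED_def)
next
  case (Suc k)
  have "SED N d ns ns (mmul (Idx N ns) M (mpow (Idx N ns) M (Suc k)))
      (real N * c * (real N ^ k * c ^ Suc k)) \<gamma>"
    using assms by (intro SED_mmul Suc.IH) auto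
  then show ?case by (simp add: mult_ac)
qed

text \<open>Decay in \<open>d(i,l) + d(i,j)\<close> rather than in \<open>max (d(i,l)) (d(i,j))\<close>: unlike the latter,
  this form survives congruence \<open>X\<^sup>T Q X\<close> with an SED matrix \<open>X\<close> at an unchanged rate.\<close>

definition SED_centered :: "nat \<Rightarrow> (nat \<Rightarrow> nat \<Rightarrow> nat) \<Rightarrow> (nat \<Rightarrow> nat) \<Rightarrow> nat
                              \<Rightarrow> gmat \<Rightarrow> real \<Rightarrow> real \<Rightarrow> bool" where
  "SED_centered N d ns i X c \<gamma> \<longleftrightarrow>
     (\<forall>l<N. \<forall>j<N. opnorm (blk ns l) (blk ns j) X \<le> c * exp (- \<gamma> * real (d i l + d i j)))"

lemma SED_centered_mtr_mmul:
  assumes X: "SED N d ns ns X cX \<gamma>" and Q: "SED_centered N d ns i Q q \<gamma>"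
    and "cX \<ge> 0" "q \<ge> 0" "\<gamma> \<ge> 0" "i < N"
    and d_tri: "\<forall>j<N. \<forall>l<N. \<forall>h<N. d j l \<le> d j h + d h l"
  shows "SED_centered N d ns i (mmul (Idx N ns) (mtr X) Q) (real N * cX * q) \<gamma>"
  unfolding SED_centered_def
proof (intro allI impI)
  fix l j assume l: "l < N" and j: "j < N"
  let ?E = "exp (- \<gamma> * real (d i l + d i j))"
  have "opnorm (blk ns l) (blk ns j) (mmul (Idx N ns) (mtr X) Q)
      \<le> (\<Sum>a<N. opnorm (blk ns l) (blk ns a) (mtr X) * opnorm (blk ns a) (blk ns j) Q)"
    by (simp add: opnorm_mmul_Idx_le)
  also have "\<dots> \<le> (\<Sum>a<N. cX * q * ?E)"
  proof (rule sum_mono)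
    fix a assume a: "a \<in> {..<N}"
    have "opnorm (blk ns l) (blk ns a) (mtr X) * opnorm (blk ns a) (blk ns j) Q
        \<le> (cX * exp (- \<gamma> * real (d a l))) * (q * exp (- \<gamma> * real (d i a + d i j)))"
      using X Q a l j order_trans[OF opnorm_mtr_le[of "blk ns a" "blk ns l" X]]
      unfolding SED_def SED_centered_def by (intro mult_mono) (auto simp: opnorm_nonneg assms)
    also have "\<dots> = cX * q * (exp (- \<gamma> * real (d i a)) * exp (- \<gamma> * real (d a l)))
        * exp (- \<gamma> * real (d i j))"
      by (simp add: exp_add[symmetric] algebra_simps)
    also have "\<dots> \<le> cX * q * exp (- \<gamma> * real (d i l)) * exp (- \<gamma> * real (d i j))"
      using d_tri a l assms by (intro mult_right_mono mult_left_mono exp_decay_mult_le) auto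
    also have "\<dots> = cX * q * ?E"
      by (simp add: exp_add[symmetric] algebra_simps)
    finally show "opnorm (blk ns l) (blk ns a) (mtr X) * opnorm (blk ns a) (blk ns j) Q
        \<le> cX * q * ?E" .
  qed
  finally show "opnorm (blk ns l) (blk ns j) (mmul (Idx N ns) (mtr X) Q) \<le> real N * cX * q * ?E"
    by simp
qed

lemma SED_centered_mmul:
  assumes Y: "SED_centered N d ns i Y cY \<gamma>" and X: "SED N d ns ns X cX \<gamma>"
    and "cY \<ge> 0" "cX \<ge> 0" "\<gamma> \<ge> 0" "i < N"
    and d_tri: "\<forall>j<N. \<forall>l<N. \<forall>h<N. d j l \<le> d j h + d h l"
  shows "SED_centered N d ns i (mmul (Idx N ns) Y X) (real N * cY * cX) \<gamma>"
  unfolding SED_centered_def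
proof (intro allI impI)
  fix l j assume l: "l < N" and j: "j < N"
  let ?E = "exp (- \<gamma> * real (d i l + d i j))"
  have "opnorm (blk ns l) (blk ns j) (mmul (Idx N ns) Y X)
      \<le> (\<Sum>b<N. opnorm (blk ns l) (blk ns b) Y * opnorm (blk ns b) (blk ns j) X)"
    by (simp add: opnorm_mmul_Idx_le)
  also have "\<dots> \<le> (\<Sum>b<N. cY * cX * ?E)"
  proof (rule sum_mono)
    fix b assume b: "b \<in> {..<N}"
    have "opnorm (blk ns l) (blk ns b) Y * opnorm (blk ns b) (blk ns j) X
        \<le> (cY * exp (- \<gamma> * real (d i l + d i b))) * (cX * exp (- \<gamma> * real (d b j)))"
      using X Y b l j unfolding SED_def SED_centered_def
      by (intro mult_mono) (auto simp: opnorm_nonneg assms)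
    also have "\<dots> = cY * cX * exp (- \<gamma> * real (d i l))
        * (exp (- \<gamma> * real (d i b)) * exp (- \<gamma> * real (d b j)))"
      by (simp add: exp_add[symmetric] algebra_simps)
    also have "\<dots> \<le> cY * cX * exp (- \<gamma> * real (d i l)) * exp (- \<gamma> * real (d i j))"
      using d_tri b j assms by (intro mult_left_mono exp_decay_mult_le) auto
    also have "\<dots> = cY * cX * ?E"
      by (simp add: exp_add[symmetric] algebra_simps)
    finally show "opnorm (blk ns l) (blk ns b) Y * opnorm (blk ns b) (blk ns j) X
        \<le> cY * cX * ?E" .
  qed
  finally show "opnorm (blk ns l) (blk ns j) (mmul (Idx N ns) Y X) \<le> real N * cY * cX * ?E"
    by simp
qed

lemma SED_centered_sandwich:
  assumes "SED N d ns ns X cX \<gamma>" "SED_centered N d ns i Q q \<gamma>"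
    and "cX \<ge> 0" "q \<ge> 0" "\<gamma> \<ge> 0" "i < N"
    and "\<forall>j<N. \<forall>l<N. \<forall>h<N. d j l \<le> d j h + d h l"
  shows "SED_centered N d ns i (sandwich (Idx N ns) X Q) ((real N)\<^sup>2 * cX\<^sup>2 * q) \<gamma>"
proof -
  have "SED_centered N d ns i (mmul (Idx N ns) (mmul (Idx N ns) (mtr X) Q) X)
      (real N * (real N * cX * q) * cX) \<gamma>"
    using assms by (intro SED_centered_mmul SED_centered_mtr_mmul) auto
  then show ?thesis
    by (simp add: sandwich_eq_mmul power2_eq_square mult_ac)
qed

lemma SED_centered_sandwich_mpow:
  assumes M: "SED N d ns ns M cM \<gamma>" and Q: "SED_centered N d ns i Q q \<gamma>"
    and "cM \<ge> 0" "q \<ge> 0" "\<gamma> \<ge> 0" "i < N"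
    and d_tri: "\<forall>j<N. \<forall>l<N. \<forall>h<N. d j l \<le> d j h + d h l"
  shows "SED_centered N d ns i (sandwich (Idx N ns) (mpow (Idx N ns) M k) Q)
           (((real N * cM)\<^sup>2) ^ k * q) \<gamma>"
proof (cases k)
  case 0
  have "opnorm (blk ns l) (blk ns j) (sandwich (Idx N ns) (mpow (Idx N ns) M 0) Q)
      = opnorm (blk ns l) (blk ns j) Q" if "l < N" "j < N" for l j
    using blk_subset_Idx[OF that(1)] blk_subset_Idx[OF that(2)]
    by (intro opnorm_cong sandwich_mpow_0) auto
  then show ?thesis using Q 0 by (simp add: SED_centered_def)
next
  case (Suc k')
  have "SED_centered N d ns i (sandwich (Idx N ns) (mpow (Idx N ns) M k) Q)
      ((real N)\<^sup>2 * (real N ^ k' * cM ^ k)\<^sup>2 * q) \<gamma>"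
    unfolding Suc using assms by (intro SED_centered_sandwich SED_mpow_Suc) auto
  moreover have "(real N)\<^sup>2 * (real N ^ k' * cM ^ k)\<^sup>2 = ((real N * cM)\<^sup>2) ^ k"
    unfolding Suc by (simp add: power_mult_distrib power_mult[symmetric] mult_ac)
  ultimately show ?thesis by simp
qed

lemma SED_centered_cost:
  assumes K_SED: "SED N d ms ns K cK \<gamma>" and "cK \<ge> 0" "\<gamma> \<ge> 0"
    and d_refl: "\<forall>j<N. d j j = 0" and "i < N"
  shows "SED_centered N d ns i (\<lambda>r c. Sblock S i r c + KRK ms i K R r c)
           (opnorm (blk ns i) (blk ns i) S + opnorm (blk ms i) (blk ms i) R * cK\<^sup>2) \<gamma>"
  unfolding SED_centered_def
proof (intro allI impI)
  fix a b assume a: "a < N" and b: "b < N"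
  let ?E = "exp (- \<gamma> * real (d i a + d i b))"
  have S_le: "opnorm (blk ns a) (blk ns b) (Sblock S i) \<le> opnorm (blk ns i) (blk ns i) S * ?E"
  proof (cases "a = i \<and> b = i")
    case True
    have "opnorm (blk ns i) (blk ns i) (Sblock S i) = opnorm (blk ns i) (blk ns i) S"
      by (rule opnorm_cong) (auto simp: Sblock_def blk_def)
    then show ?thesis using True d_refl assms by simp
  next
    case False
    then have "opnorm (blk ns a) (blk ns b) (Sblock S i) = opnorm (blk ns a) (blk ns b) (\<lambda>r c. 0)"
      by (intro opnorm_cong) (auto simp: Sblock_def blk_def)
    then show ?thesis by (simp add: opnorm_zero opnorm_nonneg)
  qed
  have "opnorm (blk ns a) (blk ns b) (KRK ms i K R)
      \<le> opnorm (blk ms i) (blk ns a) K * opnorm (blk ms i) (blk ms i) R * opnorm (blk ms i) (blk ns b) K"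
    unfolding KRK_def using opnorm_sandwich_le[of "blk ms i" "blk ns a" "blk ns b" K R]
    by (simp add: sandwich_def)
  also have "\<dots> \<le> (cK * exp (- \<gamma> * real (d i a))) * opnorm (blk ms i) (blk ms i) R
      * (cK * exp (- \<gamma> * real (d i b)))"
    using K_SED assms a b unfolding SED_def by (intro mult_mono) (auto simp: opnorm_nonneg)
  also have "\<dots> = opnorm (blk ms i) (blk ms i) R * cK\<^sup>2 * ?E"
    by (simp add: power2_eq_square exp_add[symmetric] algebra_simps)
  finally have "opnorm (blk ns a) (blk ns b) (KRK ms i K R) \<le> opnorm (blk ms i) (blk ms i) R * cK\<^sup>2 * ?E" .
  with S_le show "opnorm (blk ns a) (blk ns b) (\<lambda>r c. Sblock S i r c + KRK ms i K R r c)
      \<le> (opnorm (blk ns i) (blk ns i) S + opnorm (blk ms i) (blk ms i) R * cK\<^sup>2) * ?E"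
    by (intro order_trans[OF opnorm_add_le]) (auto simp: distrib_right)
qed

lemma lyapunov_block_le:
  assumes lyap: "\<And>r c. r \<in> Idx N ns \<Longrightarrow> c \<in> Idx N ns \<Longrightarrow>
                   P r c = Q r c + sandwich (Idx N ns) M P r c"
    and stab: "stable (Idx N ns) M \<tau> \<rho>"
    and terms: "\<And>k. SED_centered N d ns i (sandwich (Idx N ns) (mpow (Idx N ns) M k) Q) (a ^ k * q) \<gamma>"
    and "a \<ge> 0" "q \<ge> 0" "\<gamma> \<ge> 0" and l: "l < N" and j: "j < N"
  shows "opnorm (blk ns l) (blk ns j) P
           \<le> (\<Sum>k<K. a ^ k) * (q * exp (- \<gamma> * real (max (d i l) (d i j))))
             + opnorm (Idx N ns) (Idx N ns) Q * \<tau>\<^sup>2 / (1 - exp (- 2 * \<rho>)) * exp (- 2 * \<rho> * real K)"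
proof -
  let ?I = "Idx N ns" and ?bl = "blk ns l" and ?bj = "blk ns j"
  have "opnorm ?bl ?bj P = opnorm ?bl ?bj
      (\<lambda>r c. (\<Sum>k<K. sandwich ?I (mpow ?I M k) Q r c) + sandwich ?I (mpow ?I M K) P r c)"
    using blk_subset_Idx[OF l] blk_subset_Idx[OF j]
    by (intro opnorm_cong lyapunov_solution_expand[OF finite_Idx lyap]) auto
  also have "\<dots> \<le> opnorm ?bl ?bj (\<lambda>r c. \<Sum>k<K. sandwich ?I (mpow ?I M k) Q r c)
      + opnorm ?bl ?bj (sandwich ?I (mpow ?I M K) P)"
    by (rule opnorm_add_le) simp
  also have "\<dots> \<le> (\<Sum>k<K. opnorm ?bl ?bj (sandwich ?I (mpow ?I M k) Q))
      + opnorm ?I ?I (sandwich ?I (mpow ?I M K) P)"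
    using blk_subset_Idx[OF l] blk_subset_Idx[OF j] by (intro add_mono opnorm_sum_le opnorm_mono) auto
  also have "\<dots> \<le> (\<Sum>k<K. a ^ k * q * exp (- \<gamma> * real (d i l + d i j)))
      + opnorm ?I ?I Q * \<tau>\<^sup>2 / (1 - exp (- 2 * \<rho>)) * exp (- 2 * \<rho> * real K)"
    using terms l j unfolding SED_centered_def
    by (intro add_mono sum_mono lyapunov_tail_le[OF finite_Idx lyap stab]) auto
  also have "(\<Sum>k<K. a ^ k * q * exp (- \<gamma> * real (d i l + d i j)))
      \<le> (\<Sum>k<K. a ^ k) * (q * exp (- \<gamma> * real (max (d i l) (d i j))))"
    unfolding sum_distrib_right
    using assms by (intro sum_mono) (simp add: mult.assoc mult_left_mono)
  finally show ?thesis by simp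
qed

section \<open>Choice of the truncation order\<close>

lemma sum_power_le_exp_ceiling:
  fixes c x :: real
  assumes "c \<ge> 2" "x \<ge> 0"
  shows "(\<Sum>k<nat \<lceil>x\<rceil>. (c\<^sup>2) ^ k) \<le> 2 * exp (2 * x * ln c)"
proof (cases "nat \<lceil>x\<rceil>")
  case 0
  then show ?thesis by simp
next
  case (Suc k)
  have cc: "c\<^sup>2 \<ge> 4" using assms power_mono[of 2 c 2] by simp
  have "(\<Sum>k<nat \<lceil>x\<rceil>. (c\<^sup>2) ^ k) = ((c\<^sup>2) ^ Suc k - 1) / (c\<^sup>2 - 1)"
    using cc Suc by (subst geometric_sum) auto
  also have "\<dots> \<le> (c\<^sup>2 / (c\<^sup>2 - 1)) * (c\<^sup>2) ^ k"
    using cc by (simp add: divide_right_mono)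
  also have "\<dots> \<le> 2 * exp (2 * x * ln c)"
  proof (rule mult_mono)
    show "c\<^sup>2 / (c\<^sup>2 - 1) \<le> 2" using cc by (simp add: field_simps)
    have "c\<^sup>2 = exp (ln (c\<^sup>2))"
      using assms by simp
    also have "ln (c\<^sup>2) = 2 * ln c"
      using assms by (simp add: ln_realpow)
    finally have "(c\<^sup>2) ^ k = exp (real k * (2 * ln c))"
      by (simp add: exp_of_nat_mult)
    moreover have "real k \<le> x" using Suc ceiling_correct[of x] by linarith
    then have "real k * (2 * ln c) \<le> 2 * x * ln c"
      using assms by (simp add: mult_right_mono)
    ultimately show "(c\<^sup>2) ^ k \<le> exp (2 * x * ln c)" by simp
  qed auto
  finally show ?thesis .
qed

lemma balanced_truncation_le:
  fixes c \<rho> \<gamma> q T :: real and D :: nat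
  assumes c1: "c \<ge> 1" and c2: "D > 0 \<Longrightarrow> c \<ge> 2" and "\<rho> > 0" "\<gamma> > 0" "q \<ge> 0" "T \<ge> 0"
  defines "k0 \<equiv> nat \<lceil>\<gamma> * real D / (2 * (\<rho> + ln c))\<rceil>"
  shows "(\<Sum>k<k0. (c\<^sup>2) ^ k) * (q * exp (- \<gamma> * real D)) + T * exp (- 2 * \<rho> * real k0)
     \<le> (T + 2 * q) * exp (- (\<rho> * \<gamma> / (\<rho> + ln c)) * real D)"
proof -
  define x where "x = \<gamma> * real D / (2 * (\<rho> + ln c))"
  define E where "E = exp (- (\<rho> * \<gamma> / (\<rho> + ln c)) * real D)"
  have pos: "\<rho> + ln c > 0" using assms by (simp add: add_pos_nonneg)
  have x0: "x \<ge> 0" using assms pos by (simp add: x_def)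
  have tail: "T * exp (- 2 * \<rho> * real k0) \<le> T * E"
  proof (rule mult_left_mono)
    have "2 * \<rho> * x \<le> 2 * \<rho> * real k0"
      using assms x0 unfolding k0_def x_def[symmetric] by (simp add: real_nat_ceiling_ge)
    moreover have "2 * \<rho> * x = (\<rho> * \<gamma> / (\<rho> + ln c)) * real D"
      using pos by (simp add: x_def field_simps)
    ultimately show "exp (- 2 * \<rho> * real k0) \<le> E" unfolding E_def by simp
  qed (use assms in simp)
  have head: "(\<Sum>k<k0. (c\<^sup>2) ^ k) * (q * exp (- \<gamma> * real D)) \<le> 2 * q * E"
  proof (cases "D = 0")
    case True
    then show ?thesis using assms by (simp add: k0_def E_def)
  next
    case False
    have "(\<Sum>k<k0. (c\<^sup>2) ^ k) * (q * exp (- \<gamma> * real D))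
        \<le> 2 * exp (2 * x * ln c) * (q * exp (- \<gamma> * real D))"
      using sum_power_le_exp_ceiling[OF c2 x0] False assms
      unfolding k0_def x_def[symmetric] by (intro mult_right_mono) auto
    also have "\<dots> = 2 * q * exp (2 * x * ln c - \<gamma> * real D)"
      by (simp add: exp_diff exp_minus field_simps)
    also have "2 * x * ln c - \<gamma> * real D = - (\<rho> * \<gamma> / (\<rho> + ln c)) * real D"
      using pos by (simp add: x_def field_simps)
    finally show ?thesis unfolding E_def .
  qed
  show ?thesis using head tail unfolding E_def by (simp add: distrib_right)
qed

lemma lyapunov_solution_SED_away:
  assumes lyap: "\<And>r c. r \<in> Idx N ns \<Longrightarrow> c \<in> Idx N ns \<Longrightarrow>
                   P r c = Q r c + sandwich (Idx N ns) M P r c"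
    and stab: "stable (Idx N ns) M \<tau> \<rho>"
    and terms: "\<And>k. SED_centered N d ns i (sandwich (Idx N ns) (mpow (Idx N ns) M k) Q) ((c\<^sup>2) ^ k * q) \<gamma>"
    and c1: "c \<ge> 1" and c_ge: "c \<ge> real N" and q0: "q \<ge> 0" and "\<gamma> > 0"
    and d_refl: "\<forall>j<N. d j j = 0" and i: "i < N"
  shows "SED_away N d ns ns i P
           (opnorm (Idx N ns) (Idx N ns) Q * \<tau>\<^sup>2 / (1 - exp (- 2 * \<rho>)) + 2 * q)
           (\<rho> * \<gamma> / (\<rho> + ln c))"
  unfolding SED_away_def
proof (intro allI impI)
  fix l j assume l: "l < N" and j: "j < N"
  define T where "T = opnorm (Idx N ns) (Idx N ns) Q * \<tau>\<^sup>2 / (1 - exp (- 2 * \<rho>))"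
  define D where "D = max (d i l) (d i j)"
  define k0 where "k0 = nat \<lceil>\<gamma> * real D / (2 * (\<rho> + ln c))\<rceil>"
  have \<rho>: "\<rho> > 0" using stab by (simp add: stable_def)
  then have T0: "T \<ge> 0" by (simp add: T_def opnorm_nonneg)
  have c2: "c \<ge> 2" if "D > 0"
  proof -
    have "l \<noteq> i \<or> j \<noteq> i" using that d_refl i unfolding D_def by auto
    then show ?thesis using c_ge i l j by linarith
  qed
  have "opnorm (blk ns l) (blk ns j) P
      \<le> (\<Sum>k<k0. (c\<^sup>2) ^ k) * (q * exp (- \<gamma> * real D)) + T * exp (- 2 * \<rho> * real k0)"
    unfolding D_def T_def using assms by (intro lyapunov_block_le[OF lyap stab terms _ _ _ l j]) auto
  also have "\<dots> \<le> (T + 2 * q) * exp (- (\<rho> * \<gamma> / (\<rho> + ln c)) * real D)"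
    unfolding k0_def using assms by (intro balanced_truncation_le c2 \<rho> T0)
  finally show "opnorm (blk ns l) (blk ns j) P
      \<le> (T + 2 * q) * exp (- (\<rho> * \<gamma> / (\<rho> + ln c)) * real (max (d i l) (d i j)))"
    unfolding D_def .
qed

theorem theorem1:
  fixes N :: nat and d :: "nat \<Rightarrow> nat \<Rightarrow> nat"
    and ns ms :: "nat \<Rightarrow> nat"
    and A B K S R P :: gmat
    and cA cB cK \<gamma> \<kappa> \<tau> \<rho> :: real and i :: nat
  assumes d_refl: "\<forall>j<N. d j j = 0"
    and d_sym: "\<forall>j<N. \<forall>l<N. d j l = d l j"
    and d_tri: "\<forall>j<N. \<forall>l<N. \<forall>h<N. d j l \<le> d j h + d h l"
    and S_diag: "block_diag S" and S_psd: "\<forall>j<N. psd_on (blk ns j) S"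
    and R_diag: "block_diag R" and R_pd: "\<forall>j<N. pd_on (blk ms j) R"
    and A_SED: "SED N d ns ns A cA \<gamma>"
    and B_SED: "SED N d ns ms B cB \<gamma>"
    and \<gamma>_pos: "\<gamma> > 0" and cA: "cA \<ge> 1" and cB: "cB \<ge> 1"
    and \<kappa>: "\<kappa> \<ge> 1"
    and K_loc: "local_K N d ns ms \<kappa> K"
    and K_SED: "SED N d ms ns K cK \<gamma>"
    and stab: "stable (Idx N ns) (\<lambda>r c. A r c + mmul (Idx N ms) B K r c) \<tau> \<rho>"
    and i: "i < N"
    and lyap: "\<forall>r\<in>Idx N ns. \<forall>c\<in>Idx N ns.
       P r c = Sblock S i r c + KRK ms i K R r c
             + (\<Sum>k\<in>Idx N ns. \<Sum>l\<in>Idx N ns.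
                  (A k r + mmul (Idx N ms) B K k r) * P k l * (A l c + mmul (Idx N ms) B K l c))"
  shows "SED_away N d ns ns i P
     (opnorm (Idx N ns) (Idx N ns) (\<lambda>r c. Sblock S i r c + KRK ms i K R r c) * \<tau>\<^sup>2
         / (1 - exp (- 2 * \<rho>))
      + 2 * (opnorm (blk ns i) (blk ns i) S + opnorm (blk ms i) (blk ms i) R * cK\<^sup>2))
     (\<rho> * \<gamma> / (\<rho> + ln (real N * cA + (real N)\<^sup>2 * cB * cK)))"
proof -
  let ?I = "Idx N ns"
  define M where "M = (\<lambda>r c. A r c + mmul (Idx N ms) B K r c)"
  define Q where "Q = (\<lambda>r c. Sblock S i r c + KRK ms i K R r c)"
  define q where "q = opnorm (blk ns i) (blk ns i) S + opnorm (blk ms i) (blk ms i) R * cK\<^sup>2"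
  define c where "c = real N * cA + (real N)\<^sup>2 * cB * cK"
  have cK0: "cK \<ge> 0" using SED_const_nonneg[OF K_SED i] d_refl i by simp
  have M_SED: "SED N d ns ns M (cA + real N * cB * cK) \<gamma>"
    unfolding M_def using cB cK0 \<gamma>_pos by (intro SED_add SED_mmul A_SED B_SED K_SED d_tri) auto
  have c_eq: "c = real N * (cA + real N * cB * cK)"
    by (simp add: c_def power2_eq_square algebra_simps)
  have "0 \<le> real N * cB * cK" using cB cK0 by simp
  then have "real N * 1 \<le> c" unfolding c_eq using cA by (intro mult_left_mono) auto
  then have c_ge: "c \<ge> real N" and c1: "c \<ge> 1" using i by auto
  have q0: "q \<ge> 0" by (simp add: q_def opnorm_nonneg)
  have "SED_centered N d ns i Q q \<gamma>"
    unfolding Q_def q_def using K_SED cK0 \<gamma>_pos d_refl i by (intro SED_centered_cost) auto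
  then have terms: "SED_centered N d ns i (sandwich ?I (mpow ?I M k) Q) ((c\<^sup>2) ^ k * q) \<gamma>" for k
    unfolding c_eq using cA cB cK0 q0 \<gamma>_pos i d_tri
    by (intro SED_centered_sandwich_mpow[OF M_SED]) auto
  have lyap': "P r c = Q r c + sandwich ?I M P r c" if "r \<in> ?I" "c \<in> ?I" for r c
    using lyap that unfolding Q_def M_def sandwich_def by simp
  show ?thesis
    unfolding Q_def[symmetric] q_def[symmetric] c_def[symmetric]
    using lyapunov_solution_SED_away[OF lyap' stab[folded M_def] terms c1 c_ge q0 \<gamma>_pos d_refl i] .
qed

end
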